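(* Let $n\ge1$ and let $X$ be uniformly distributed on the unit cube $[0,1]^n$, with $\mathbb R^n$ carrying the Euclidean metric and pairs the Manhattan metric. Then \[ \frac{\sqrt n}{3}\le\mathrm{eVar}(X)\le\sqrt{n/6}. \]
   Context: For probability measures $\mu,\nu$ with finite first moments on a metric space $(S,\rho)$, $e(\mu,\nu)=\inf_\gamma\int\rho\,d\gamma$ over all couplings $\gamma$ of $\mu,\nu$. Pairs of points of $\mathbb R^n$ carry the metric $d[(x,y),(u,v)]=|x-u|+|y-v|$ ($|\cdot|$ Euclidean norm). The earth mover's variance is $\mathrm{eVar}(X)=e\big[(X,X),(X_2,X_3)\big]$, the distance w.r.t. $d$ between the law of $(X,X)$ and the law of $(X_2,X_3)$, where $X_2,X_3$ are independent copies of $X$. *)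

theory Defs
  imports "HOL-Probability.Probability"
begin

definition couplings :: "'a measure \<Rightarrow> 'b measure \<Rightarrow> ('a \<times> 'b) measure set" where
  "couplings \<mu> \<nu> = {\<gamma>. sets \<gamma> = sets (\<mu> \<Otimes>\<^sub>M \<nu>) \<and> prob_space \<gamma> \<and>
      distr \<gamma> \<mu> fst = \<mu> \<and> distr \<gamma> \<nu> snd = \<nu>}"

definition emd :: "('a \<Rightarrow> 'a \<Rightarrow> real) \<Rightarrow> 'a measure \<Rightarrow> 'a measure \<Rightarrow> ennreal" where
  "emd \<rho> \<mu> \<nu> = (INF \<gamma>\<in>couplings \<mu> \<nu>. \<integral>\<^sup>+ z. ennreal (\<rho> (fst z) (snd z)) \<partial>\<gamma>)"

definition dpair :: "('a::metric_space \<times> 'a) \<Rightarrow> ('a \<times> 'a) \<Rightarrow> real" where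
  "dpair p q = dist (fst p) (fst q) + dist (snd p) (snd q)"

definition eVar :: "('a::metric_space) measure \<Rightarrow> ennreal" where
  "eVar M = emd dpair (distr M (M \<Otimes>\<^sub>M M) (\<lambda>x. (x, x))) (M \<Otimes>\<^sub>M M)"

end

theory Submission
  imports Defs
begin

(* For every law, eVar is the mean distance E|X2 - X3|: the coupling ((X2,X2),(X2,X3)) costs exactly
   that, and for any coupling ((X,X),(Y,Z)) the triangle inequality |Y - Z| <= |X - Y| + |X - Z| bounds
   the cost from below. For the unit cube each coordinate of X2 - X3 is a difference of two independent
   uniform variables on [0,1], with E|.| = 1/3 and E(.)^2 = 1/6. The lower bound sqrt n / 3 follows from
   |v| >= |v|_1 / sqrt n, the upper bound from E|X2 - X3| <= (E|X2 - X3|^2)^(1/2) = sqrt (n/6). *)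

lemma measurable_continuous_on_borel_sets:
  assumes "sets M = sets borel" "sets N = sets borel" "continuous_on UNIV f"
  shows "f \<in> measurable M N"
  using borel_measurable_continuous_onI[OF assms(3)]
  by (simp add: measurable_cong_sets[OF assms(1,2)])

lemma sets_pair_measure_borel:
  fixes M :: "'a::second_countable_topology measure" and N :: "'b::second_countable_topology measure"
  assumes "sets M = sets borel" "sets N = sets borel"
  shows "sets (M \<Otimes>\<^sub>M N) = sets borel"
  using sets_pair_measure_cong[OF assms] by (simp only: borel_prod)

lemma dist_snd_le_dpair_plus_dist_fst:
  fixes p q :: "'a::metric_space \<times> 'a"
  shows "dist (fst q) (snd q) \<le> dpair p q + dist (fst p) (snd p)"
  unfolding dpair_def using dist_triangle[of "fst q" "snd q" "fst p"] dist_triangle[of "fst p" "snd q" "snd p"]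
  by (simp add: dist_commute)

lemma mean_dist_le_coupling_cost:
  fixes M :: "'a::{metric_space, second_countable_topology} measure"
  assumes sets_M: "sets M = sets borel"
    and coupling: "\<gamma> \<in> couplings (distr M (M \<Otimes>\<^sub>M M) (\<lambda>x. (x, x))) (M \<Otimes>\<^sub>M M)"
  shows "(\<integral>\<^sup>+ z. ennreal (dist (fst z) (snd z)) \<partial>(M \<Otimes>\<^sub>M M))
           \<le> (\<integral>\<^sup>+ z. ennreal (dpair (fst z) (snd z)) \<partial>\<gamma>)"
proof -
  let ?P = "M \<Otimes>\<^sub>M M" and ?D = "distr M (M \<Otimes>\<^sub>M M) (\<lambda>x. (x, x))"
  have sets_P: "sets ?P = sets borel" by (rule sets_pair_measure_borel[OF sets_M sets_M])
  have sets_D: "sets ?D = sets borel" using sets_P by simp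
  from coupling have "sets \<gamma> = sets (?D \<Otimes>\<^sub>M ?P)" and marg_D: "distr \<gamma> ?D fst = ?D"
    and marg_P: "distr \<gamma> ?P snd = ?P"
    unfolding couplings_def by auto
  then have sets_\<gamma>: "sets \<gamma> = sets borel" using sets_pair_measure_borel[OF sets_D sets_P] by simp
  have fst_meas: "fst \<in> measurable \<gamma> ?D" and snd_meas: "snd \<in> measurable \<gamma> ?P"
    by (auto intro!: measurable_continuous_on_borel_sets sets_\<gamma> sets_D sets_P continuous_intros)
  have dist_meas: "(\<lambda>z. dist (fst z) (snd z)) \<in> borel_measurable N" if "sets N = sets borel" for N :: "('a \<times> 'a) measure"
    by (intro measurable_continuous_on_borel_sets that continuous_intros) simp
  have cost_meas: "(\<lambda>z. ennreal (dpair (fst z) (snd z))) \<in> borel_measurable \<gamma>"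
    unfolding dpair_def by (intro measurable_continuous_on_borel_sets sets_\<gamma> continuous_on_ennreal continuous_intros) simp
  have diag_meas: "(\<lambda>x. (x, x)) \<in> measurable M ?P"
    by (intro measurable_continuous_on_borel_sets sets_M sets_P continuous_intros)
  have diag_cost: "(\<integral>\<^sup>+ z. ennreal (dist (fst (fst z)) (snd (fst z))) \<partial>\<gamma>) = 0"
  proof -
    have "(\<integral>\<^sup>+ z. ennreal (dist (fst (fst z)) (snd (fst z))) \<partial>\<gamma>)
        = (\<integral>\<^sup>+ p. ennreal (dist (fst p) (snd p)) \<partial>distr \<gamma> ?D fst)"
      by (rule nn_integral_distr[OF fst_meas, symmetric]) (simp add: dist_meas[OF sets_P])
    also have "\<dots> = (\<integral>\<^sup>+ x. ennreal (dist x x) \<partial>M)"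
      unfolding marg_D by (subst nn_integral_distr[OF diag_meas]) (simp_all add: dist_meas[OF sets_P])
    finally show ?thesis by simp
  qed
  have "(\<integral>\<^sup>+ z. ennreal (dist (fst z) (snd z)) \<partial>?P)
      = (\<integral>\<^sup>+ z. ennreal (dist (fst (snd z)) (snd (snd z))) \<partial>\<gamma>)"
    using nn_integral_distr[OF snd_meas, of "\<lambda>z. ennreal (dist (fst z) (snd z))"] marg_P
    by (simp add: dist_meas[OF sets_P])
  also have "\<dots> \<le> (\<integral>\<^sup>+ z. ennreal (dpair (fst z) (snd z)) + ennreal (dist (fst (fst z)) (snd (fst z))) \<partial>\<gamma>)"
    using dist_snd_le_dpair_plus_dist_fst
    by (intro nn_integral_mono) (simp add: dpair_def ennreal_leI flip: ennreal_plus)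
  also have "\<dots> = (\<integral>\<^sup>+ z. ennreal (dpair (fst z) (snd z)) \<partial>\<gamma>)"
    by (subst nn_integral_add)
       (auto simp: diag_cost cost_meas
         intro!: measurable_continuous_on_borel_sets sets_\<gamma> continuous_on_ennreal continuous_intros)
  finally show ?thesis .
qed

lemma eVar_ge_mean_dist:
  fixes M :: "'a::{metric_space, second_countable_topology} measure"
  assumes "sets M = sets borel"
  shows "(\<integral>\<^sup>+ z. ennreal (dist (fst z) (snd z)) \<partial>(M \<Otimes>\<^sub>M M)) \<le> eVar M"
  unfolding eVar_def emd_def using assms by (intro INF_greatest mean_dist_le_coupling_cost)

lemma eVar_le_mean_dist:
  fixes M :: "'a::{metric_space, second_countable_topology} measure"
  assumes "prob_space M" and sets_M: "sets M = sets borel"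
  shows "eVar M \<le> (\<integral>\<^sup>+ z. ennreal (dist (fst z) (snd z)) \<partial>(M \<Otimes>\<^sub>M M))"
proof -
  interpret M: prob_space M by fact
  let ?P = "M \<Otimes>\<^sub>M M" and ?D = "distr M (M \<Otimes>\<^sub>M M) (\<lambda>x. (x, x))"
  let ?h = "\<lambda>z. ((fst z, fst z), z)"
  have sets_P: "sets ?P = sets borel" by (rule sets_pair_measure_borel[OF sets_M sets_M])
  have sets_D: "sets ?D = sets borel" using sets_P by simp
  have sets_DP: "sets (?D \<Otimes>\<^sub>M ?P) = sets borel" by (rule sets_pair_measure_borel[OF sets_D sets_P])
  have diag_meas: "(\<lambda>x. (x, x)) \<in> measurable M ?P"
    by (intro measurable_continuous_on_borel_sets sets_M sets_P continuous_intros)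
  have h_meas: "?h \<in> measurable ?P (?D \<Otimes>\<^sub>M ?P)"
    by (intro measurable_continuous_on_borel_sets sets_P sets_DP continuous_intros)
  define \<gamma> where "\<gamma> = distr ?P (?D \<Otimes>\<^sub>M ?P) ?h"
  have "\<gamma> \<in> couplings ?D ?P"
    unfolding couplings_def mem_Collect_eq
  proof (intro conjI)
    show "sets \<gamma> = sets (?D \<Otimes>\<^sub>M ?P)" unfolding \<gamma>_def by simp
    show "prob_space \<gamma>"
      unfolding \<gamma>_def by (intro prob_space.prob_space_distr[OF _ h_meas] prob_space_pair M.prob_space_axioms)
    have "distr \<gamma> ?D fst = distr ?P ?P ((\<lambda>x. (x, x)) \<circ> fst)"
      unfolding \<gamma>_def by (subst distr_distr[OF measurable_fst h_meas]) (simp add: comp_def cong: distr_cong)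
    also have "\<dots> = ?D"
      by (simp add: distr_distr[OF diag_meas measurable_fst, symmetric] M.distr_pair_fst)
    finally show "distr \<gamma> ?D fst = ?D" .
    show "distr \<gamma> ?P snd = ?P"
      unfolding \<gamma>_def by (subst distr_distr[OF measurable_snd h_meas]) (simp add: comp_def)
  qed
  then have "eVar M \<le> (\<integral>\<^sup>+ z. ennreal (dpair (fst z) (snd z)) \<partial>\<gamma>)"
    unfolding eVar_def emd_def by (rule INF_lower)
  also have "\<dots> = (\<integral>\<^sup>+ z. ennreal (dist (fst z) (snd z)) \<partial>?P)"
    unfolding \<gamma>_def dpair_def
    by (subst nn_integral_distr[OF h_meas])
       (auto intro!: measurable_continuous_on_borel_sets sets_DP continuous_on_ennreal continuous_intros)
  finally show ?thesis .
qed

lemma eVar_eq_mean_dist: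
  fixes M :: "'a::{metric_space, second_countable_topology} measure"
  assumes "prob_space M" "sets M = sets borel"
  shows "eVar M = (\<integral>\<^sup>+ z. ennreal (dist (fst z) (snd z)) \<partial>(M \<Otimes>\<^sub>M M))"
  using eVar_le_mean_dist[OF assms] eVar_ge_mean_dist[OF assms(2)] by (rule antisym)

lemma nn_integral_le_sqrt_nn_integral_square:
  fixes f :: "'a \<Rightarrow> real"
  assumes "prob_space M" and f: "f \<in> borel_measurable M"
    and square: "(\<integral>\<^sup>+ x. ennreal ((f x)\<^sup>2) \<partial>M) = ennreal v"
  shows "(\<integral>\<^sup>+ x. ennreal (f x) \<partial>M) \<le> ennreal (sqrt v)"
proof (cases "v \<le> 0")
  case True
  then have "AE x in M. ennreal ((f x)\<^sup>2) = 0"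
    using square f by (subst nn_integral_0_iff_AE[symmetric]) (simp_all add: ennreal_eq_0_iff)
  then have "AE x in M. ennreal (f x) = 0" by eventually_elim simp
  then have "(\<integral>\<^sup>+ x. ennreal (f x) \<partial>M) = 0" using f by (subst nn_integral_0_iff_AE) simp_all
  then show ?thesis by simp
next
  case False
  interpret prob_space M by fact
  define a where "a = sqrt v"
  have a: "0 < a" using False by (simp add: a_def)
  \<comment> \<open>AM-GM: \<open>t \<le> t\<^sup>2 / (2 a) + a / 2\<close>, integrated and evaluated at \<open>a\<^sup>2 = v\<close>.\<close>
  have am_gm: "ennreal t \<le> ennreal (1 / (2 * a)) * ennreal (t\<^sup>2) + ennreal (a / 2)" for t
  proof -
    have "t \<le> t\<^sup>2 / (2 * a) + a / 2"
      using a zero_le_power2[of "t - a"] by (simp add: field_simps power2_eq_square)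
    with a show ?thesis by (simp add: ennreal_leI flip: ennreal_mult ennreal_plus)
  qed
  have "(\<integral>\<^sup>+ x. ennreal (f x) \<partial>M) \<le> (\<integral>\<^sup>+ x. ennreal (1 / (2 * a)) * ennreal ((f x)\<^sup>2) + ennreal (a / 2) \<partial>M)"
    by (intro nn_integral_mono am_gm)
  also have "\<dots> = ennreal (1 / (2 * a)) * ennreal v + ennreal (a / 2)"
    using f by (simp add: nn_integral_add nn_integral_cmult square emeasure_space_1)
  also have "\<dots> = ennreal a"
    using a False by (simp add: a_def field_simps flip: ennreal_mult ennreal_plus)
  finally show ?thesis by (simp add: a_def)
qed

lemma sum_abs_component_diff_le:
  fixes x y :: "'a::euclidean_space"
  shows "(\<Sum>b\<in>Basis. \<bar>x \<bullet> b - y \<bullet> b\<bar>) \<le> sqrt DIM('a) * dist x y"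
proof -
  have "(\<Sum>b\<in>Basis. \<bar>x \<bullet> b - y \<bullet> b\<bar>) = (\<Sum>b\<in>Basis. \<bar>dist (x \<bullet> b) (y \<bullet> b)\<bar> * \<bar>1\<bar>)"
    by (simp add: dist_real_def)
  also have "\<dots> \<le> L2_set (\<lambda>b. dist (x \<bullet> b) (y \<bullet> b)) Basis * L2_set (\<lambda>_. 1) (Basis :: 'a set)"
    by (rule L2_set_mult_ineq)
  finally show ?thesis by (simp add: euclidean_dist_l2[symmetric] L2_set_constant mult.commute)
qed

lemma dist_square_eq_sum_component:
  fixes x y :: "'a::euclidean_space"
  shows "(dist x y)\<^sup>2 = (\<Sum>b\<in>Basis. (x \<bullet> b - y \<bullet> b)\<^sup>2)"
  by (simp add: euclidean_dist_l2[of x y] L2_set_def dist_real_def sum_nonneg)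

lemma has_integral_of_has_real_derivative:
  fixes F f :: "real \<Rightarrow> real"
  assumes "a \<le> b" and "\<And>x. (F has_real_derivative f x) (at x)"
  shows "(f has_integral (F b - F a)) {a..b}"
  using assms
  by (intro fundamental_theorem_of_calculus)
     (auto simp: has_real_derivative_iff_has_vector_derivative[symmetric] has_field_derivative_at_within)

abbreviation unit_interval_uniform :: "real measure" where
  "unit_interval_uniform \<equiv> uniform_measure lborel {0..1}"

lemma nn_integral_unit_interval_uniform:
  fixes f :: "real \<Rightarrow> real"
  assumes f: "f \<in> borel_measurable borel" and nonneg: "\<And>t. t \<in> {0..1} \<Longrightarrow> 0 \<le> f t"
    and I: "(f has_integral I) {0..1}"
  shows "(\<integral>\<^sup>+ t. ennreal (f t) \<partial>unit_interval_uniform) = ennreal I"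
proof -
  have "(\<integral>\<^sup>+ t. ennreal (f t) \<partial>unit_interval_uniform) = (\<integral>\<^sup>+ t. ennreal (f t) * indicator {0..1} t \<partial>lborel)"
    using f by (simp add: nn_integral_uniform_measure divide_ennreal_def)
  also have "\<dots> = (\<integral>\<^sup>+ t. ennreal (if t \<in> {0..1} then f t else 0) \<partial>lborel)"
    by (intro nn_integral_cong) (simp split: split_indicator)
  also have "\<dots> = ennreal I"
  proof (rule nn_integral_has_integral_lborel)
    show "((\<lambda>t. if t \<in> {0..1} then f t else 0) has_integral I) UNIV"
      using I by (simp only: has_integral_restrict_UNIV)
  qed (use f nonneg in auto)
  finally show ?thesis .
qed

lemma nn_integral_unit_interval_uniform_pair:
  fixes h :: "real \<Rightarrow> real \<Rightarrow> real" and F :: "real \<Rightarrow> real"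
  assumes h: "(\<lambda>z. h (fst z) (snd z)) \<in> borel_measurable borel"
    and inner: "\<And>s. s \<in> {0..1} \<Longrightarrow> (\<integral>\<^sup>+ t. ennreal (h s t) \<partial>unit_interval_uniform) = ennreal (F s)"
  shows "(\<integral>\<^sup>+ z. ennreal (h (fst z) (snd z)) \<partial>(unit_interval_uniform \<Otimes>\<^sub>M unit_interval_uniform))
       = (\<integral>\<^sup>+ s. ennreal (F s) \<partial>unit_interval_uniform)"
proof -
  interpret W: prob_space unit_interval_uniform by (rule prob_space_uniform_measure) simp_all
  have "(\<integral>\<^sup>+ z. ennreal (h (fst z) (snd z)) \<partial>(unit_interval_uniform \<Otimes>\<^sub>M unit_interval_uniform))
      = (\<integral>\<^sup>+ s. \<integral>\<^sup>+ t. ennreal (h s t) \<partial>unit_interval_uniform \<partial>unit_interval_uniform)"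
    using W.nn_integral_fst[where f = "\<lambda>z. ennreal (h (fst z) (snd z))"] h
    by (simp add: measurable_cong_sets[OF sets_pair_measure_borel refl])
  also have "\<dots> = (\<integral>\<^sup>+ s. ennreal (F s) \<partial>unit_interval_uniform)"
    by (intro nn_integral_cong_AE AE_uniform_measureI) (simp_all add: inner)
  finally show ?thesis .
qed

lemma mean_abs_diff_unit_interval_uniform:
  "(\<integral>\<^sup>+ z. ennreal \<bar>fst z - snd z\<bar> \<partial>(unit_interval_uniform \<Otimes>\<^sub>M unit_interval_uniform)) = ennreal (1/3)"
proof -
  have inner: "(\<integral>\<^sup>+ t. ennreal \<bar>s - t\<bar> \<partial>unit_interval_uniform) = ennreal (s\<^sup>2 - s + 1/2)"
    if s: "s \<in> {0..1}" for s
  proof (rule nn_integral_unit_interval_uniform)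
    have "((\<lambda>t. s - t) has_integral (s * s - s\<^sup>2 / 2) - (s * 0 - 0\<^sup>2 / 2)) {0..s}"
      using s by (intro has_integral_of_has_real_derivative[where F = "\<lambda>t. s * t - t\<^sup>2 / 2"])
        (auto intro!: derivative_eq_intros)
    then have "((\<lambda>t. s - t) has_integral s\<^sup>2 / 2) {0..s}" by (simp add: power2_eq_square)
    then have left: "((\<lambda>t. \<bar>s - t\<bar>) has_integral s\<^sup>2 / 2) {0..s}"
      by (rule has_integral_eq[rotated]) (auto simp: power2_eq_square)
    have "((\<lambda>t. t - s) has_integral (1\<^sup>2 / 2 - s * 1) - (s\<^sup>2 / 2 - s * s)) {s..1}"
      using s by (intro has_integral_of_has_real_derivative[where F = "\<lambda>t. t\<^sup>2 / 2 - s * t"])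
        (auto intro!: derivative_eq_intros)
    then have "((\<lambda>t. t - s) has_integral (1/2 - s + s\<^sup>2 / 2)) {s..1}" by (simp add: power2_eq_square)
    then have right: "((\<lambda>t. \<bar>s - t\<bar>) has_integral (1/2 - s + s\<^sup>2 / 2)) {s..1}"
      by (rule has_integral_eq[rotated]) (auto simp: power2_eq_square)
    show "((\<lambda>t. \<bar>s - t\<bar>) has_integral (s\<^sup>2 - s + 1/2)) {0..1}"
      using has_integral_combine[OF _ _ left right] s by (simp add: algebra_simps)
  qed simp_all
  have "(\<integral>\<^sup>+ s. ennreal (s\<^sup>2 - s + 1/2) \<partial>unit_interval_uniform) = ennreal (1/3)"
  proof (rule nn_integral_unit_interval_uniform)
    show "0 \<le> s\<^sup>2 - s + 1/2" for s :: real
      using zero_le_power2[of "s - 1/2"] by (simp add: power2_eq_square algebra_simps)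
    have "((\<lambda>s::real. s\<^sup>2 - s + 1/2) has_integral (1^3/3 - 1\<^sup>2/2 + 1/2) - (0^3/3 - 0\<^sup>2/2 + 0/2)) {0..1}"
      by (intro has_integral_of_has_real_derivative[where F = "\<lambda>s. s^3/3 - s\<^sup>2/2 + s/2"])
         (auto intro!: derivative_eq_intros simp: power2_eq_square)
    then show "((\<lambda>s::real. s\<^sup>2 - s + 1/2) has_integral 1/3) {0..1}" by simp
  qed simp
  with inner show ?thesis
    by (subst nn_integral_unit_interval_uniform_pair[where F = "\<lambda>s. s\<^sup>2 - s + 1/2"])
       (auto intro!: borel_measurable_continuous_onI continuous_intros)
qed

lemma mean_sq_diff_unit_interval_uniform:
  "(\<integral>\<^sup>+ z. ennreal ((fst z - snd z)\<^sup>2) \<partial>(unit_interval_uniform \<Otimes>\<^sub>M unit_interval_uniform)) = ennreal (1/6)"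
proof -
  have inner: "(\<integral>\<^sup>+ t. ennreal ((s - t)\<^sup>2) \<partial>unit_interval_uniform) = ennreal (s\<^sup>2 - s + 1/3)" for s
  proof (rule nn_integral_unit_interval_uniform)
    have "((\<lambda>t. (s - t)\<^sup>2) has_integral (1 - s) ^ 3 / 3 - (0 - s) ^ 3 / 3) {0..1}"
      by (intro has_integral_of_has_real_derivative[where F = "\<lambda>t. (t - s) ^ 3 / 3"])
         (auto intro!: derivative_eq_intros simp: power2_eq_square field_simps)
    moreover have "(1 - s) ^ 3 / 3 - (0 - s) ^ 3 / 3 = s\<^sup>2 - s + 1/3"
      by (simp add: power2_eq_square power3_eq_cube field_simps)
    ultimately show "((\<lambda>t. (s - t)\<^sup>2) has_integral (s\<^sup>2 - s + 1/3)) {0..1}" by simp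
  qed simp_all
  have "(\<integral>\<^sup>+ s. ennreal (s\<^sup>2 - s + 1/3) \<partial>unit_interval_uniform) = ennreal (1/6)"
  proof (rule nn_integral_unit_interval_uniform)
    show "0 \<le> s\<^sup>2 - s + 1/3" for s :: real
      using zero_le_power2[of "s - 1/2"] by (simp add: power2_eq_square algebra_simps)
    have "((\<lambda>s::real. s\<^sup>2 - s + 1/3) has_integral (1^3/3 - 1\<^sup>2/2 + 1/3) - (0^3/3 - 0\<^sup>2/2 + 0/3)) {0..1}"
      by (intro has_integral_of_has_real_derivative[where F = "\<lambda>s. s^3/3 - s\<^sup>2/2 + s/3"])
         (auto intro!: derivative_eq_intros simp: power2_eq_square)
    then show "((\<lambda>s::real. s\<^sup>2 - s + 1/3) has_integral 1/6) {0..1}" by simp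
  qed simp
  with inner show ?thesis
    by (subst nn_integral_unit_interval_uniform_pair[where F = "\<lambda>s. s\<^sup>2 - s + 1/3"])
       (auto intro!: borel_measurable_continuous_onI continuous_intros)
qed

abbreviation unit_cube_uniform :: "'a::euclidean_space measure" where
  "unit_cube_uniform \<equiv> uniform_measure lborel (cbox 0 One)"

lemma emeasure_lborel_unit_cube: "emeasure lborel (cbox 0 (One :: 'a::euclidean_space)) = 1"
  by (simp add: emeasure_lborel_cbox_eq)

lemma prob_space_unit_cube_uniform: "prob_space (unit_cube_uniform :: 'a::euclidean_space measure)"
  by (rule prob_space_uniform_measure) (simp_all add: emeasure_lborel_unit_cube)

lemma measure_unit_cube_uniform_halfspace:
  fixes b :: "'a::euclidean_space"
  assumes b: "b \<in> Basis"
  shows "measure unit_cube_uniform {x::'a. x \<bullet> b \<le> a} = (if a < 0 then 0 else min a 1)"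
proof -
  have "measure unit_cube_uniform {x::'a. x \<bullet> b \<le> a} = measure lborel (cbox 0 One \<inter> {x::'a. x \<bullet> b \<le> a})"
    by (subst measure_uniform_measure) (simp_all add: emeasure_lborel_unit_cube measure_def)
  also have "\<dots> = (if a < 0 then 0 else min a 1)"
  proof (cases "a < 0")
    case True
    then have "cbox 0 One \<inter> {x::'a. x \<bullet> b \<le> a} = {}"
      using b by (force simp: mem_box)
    then show ?thesis using True by simp
  next
    case False
    then have "cbox 0 One \<inter> {x::'a. x \<bullet> b \<le> a} = cbox 0 (One - (1 - min a 1) *\<^sub>R b)"
      using b by (auto simp: mem_box inner_diff_left inner_Basis split: if_splits)
    moreover have "(\<Prod>b'\<in>Basis. (One - (1 - min a 1) *\<^sub>R b) \<bullet> b') = min a 1"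
    proof -
      have "(\<Prod>b'\<in>Basis. (One - (1 - min a 1) *\<^sub>R b) \<bullet> b') = (\<Prod>b'\<in>Basis. if b' = b then min a 1 else 1)"
        using b by (intro prod.cong) (auto simp: inner_diff_left inner_Basis)
      then show ?thesis using b by simp
    qed
    ultimately show ?thesis using False b by (simp add: measure_def emeasure_lborel_cbox_eq inner_diff_left inner_Basis)
  qed
  finally show ?thesis .
qed

lemma distr_unit_cube_uniform_component:
  fixes b :: "'a::euclidean_space"
  assumes b: "b \<in> Basis"
  shows "distr unit_cube_uniform lborel (\<lambda>x::'a. x \<bullet> b) = unit_interval_uniform"
proof (rule cdf_unique)
  interpret prob_space "unit_cube_uniform :: 'a measure" by (rule prob_space_unit_cube_uniform)
  show "real_distribution (distr unit_cube_uniform lborel (\<lambda>x::'a. x \<bullet> b))"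
    by (simp add: real_distribution_def real_distribution_axioms_def prob_space_distr)
  show "real_distribution unit_interval_uniform"
    by (simp add: real_distribution_def real_distribution_axioms_def prob_space_uniform_measure)
  have "cdf (distr unit_cube_uniform lborel (\<lambda>x::'a. x \<bullet> b)) a = cdf unit_interval_uniform a" for a
  proof -
    have "cdf (distr unit_cube_uniform lborel (\<lambda>x::'a. x \<bullet> b)) a = measure unit_cube_uniform {x::'a. x \<bullet> b \<le> a}"
      by (simp add: cdf_def measure_distr vimage_def Collect_conj_eq)
    \<comment> \<open>On \<open>real\<close> the unit cube is \<open>{0..1}\<close>, so the same formula is the cdf of the unit interval.\<close>
    also have "\<dots> = measure unit_cube_uniform {x::real. x \<bullet> 1 \<le> a}"
      using measure_unit_cube_uniform_halfspace[OF b] measure_unit_cube_uniform_halfspace[of "1::real"]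
      by simp
    also have "\<dots> = cdf unit_interval_uniform a"
      by (simp add: cdf_def cbox_interval atMost_def)
    finally show ?thesis .
  qed
  then show "cdf (distr unit_cube_uniform lborel (\<lambda>x::'a. x \<bullet> b)) = cdf unit_interval_uniform" ..
qed

lemma nn_integral_unit_cube_uniform_pair_component:
  fixes b :: "'a::euclidean_space"
  assumes b: "b \<in> Basis" and g: "g \<in> borel_measurable borel"
  shows "(\<integral>\<^sup>+ z. g (fst z \<bullet> b, snd z \<bullet> b) \<partial>(unit_cube_uniform \<Otimes>\<^sub>M unit_cube_uniform))
       = (\<integral>\<^sup>+ z. g z \<partial>(unit_interval_uniform \<Otimes>\<^sub>M unit_interval_uniform))"
proof -
  let ?U = "unit_cube_uniform :: 'a measure"
  have component: "(\<lambda>x. x \<bullet> b) \<in> measurable ?U lborel" by simp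
  have "unit_interval_uniform \<Otimes>\<^sub>M unit_interval_uniform
      = distr (?U \<Otimes>\<^sub>M ?U) (lborel \<Otimes>\<^sub>M lborel) (\<lambda>(x, y). (x \<bullet> b, y \<bullet> b))"
    unfolding distr_unit_cube_uniform_component[OF b, symmetric]
    by (rule pair_measure_distr[OF component component])
       (simp add: distr_unit_cube_uniform_component[OF b] prob_space_imp_sigma_finite prob_space_uniform_measure)
  moreover have "g \<in> borel_measurable (lborel \<Otimes>\<^sub>M lborel)"
    using g by (simp add: measurable_cong_sets[OF sets_pair_measure_borel refl])
  ultimately show ?thesis
    by (simp add: nn_integral_distr case_prod_beta')
qed

lemma mean_abs_diff_unit_cube_uniform_component:
  fixes b :: "'a::euclidean_space"
  assumes "b \<in> Basis"
  shows "(\<integral>\<^sup>+ z. ennreal \<bar>fst z \<bullet> b - snd z \<bullet> b\<bar> \<partial>(unit_cube_uniform \<Otimes>\<^sub>M unit_cube_uniform)) = ennreal (1/3)"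
  using nn_integral_unit_cube_uniform_pair_component[OF assms, of "\<lambda>z. ennreal \<bar>fst z - snd z\<bar>"]
  by (simp add: mean_abs_diff_unit_interval_uniform borel_measurable_continuous_onI continuous_on_ennreal continuous_intros)

lemma mean_sq_diff_unit_cube_uniform_component:
  fixes b :: "'a::euclidean_space"
  assumes "b \<in> Basis"
  shows "(\<integral>\<^sup>+ z. ennreal ((fst z \<bullet> b - snd z \<bullet> b)\<^sup>2) \<partial>(unit_cube_uniform \<Otimes>\<^sub>M unit_cube_uniform)) = ennreal (1/6)"
  using nn_integral_unit_cube_uniform_pair_component[OF assms, of "\<lambda>z. ennreal ((fst z - snd z)\<^sup>2)"]
  by (simp add: mean_sq_diff_unit_interval_uniform borel_measurable_continuous_onI continuous_on_ennreal continuous_intros)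

lemma mean_dist_unit_cube_uniform_ge:
  "ennreal (sqrt DIM('a) / 3)
     \<le> (\<integral>\<^sup>+ z. ennreal (dist (fst z) (snd z)) \<partial>(unit_cube_uniform \<Otimes>\<^sub>M (unit_cube_uniform :: 'a::euclidean_space measure)))"
proof -
  let ?UU = "unit_cube_uniform \<Otimes>\<^sub>M (unit_cube_uniform :: 'a measure)"
  let ?c = "1 / sqrt DIM('a)"
  have sets_UU: "sets ?UU = sets borel" by (rule sets_pair_measure_borel) simp_all
  have "ennreal (sqrt DIM('a) / 3) = (\<Sum>b\<in>(Basis :: 'a set). ennreal ?c * ennreal (1/3))"
    by (simp add: ennreal_of_nat_eq_real_of_nat real_div_sqrt flip: ennreal_mult)
  also have "\<dots> = (\<Sum>b\<in>Basis. \<integral>\<^sup>+ z. ennreal ?c * ennreal \<bar>fst z \<bullet> b - snd z \<bullet> b\<bar> \<partial>?UU)"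
    by (intro sum.cong refl)
       (simp add: nn_integral_cmult mean_abs_diff_unit_cube_uniform_component sets_UU
         measurable_continuous_on_borel_sets continuous_on_ennreal continuous_intros)
  also have "\<dots> = (\<integral>\<^sup>+ z. (\<Sum>b\<in>Basis. ennreal ?c * ennreal \<bar>fst z \<bullet> b - snd z \<bullet> b\<bar>) \<partial>?UU)"
    by (subst nn_integral_sum)
       (simp_all add: sets_UU measurable_continuous_on_borel_sets continuous_on_ennreal continuous_intros)
  also have "\<dots> \<le> (\<integral>\<^sup>+ z. ennreal (dist (fst z) (snd z)) \<partial>?UU)"
  proof (intro nn_integral_mono)
    fix z :: "'a \<times> 'a"
    have "?c * (\<Sum>b\<in>Basis. \<bar>fst z \<bullet> b - snd z \<bullet> b\<bar>) \<le> dist (fst z) (snd z)"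
      using sum_abs_component_diff_le[of "fst z" "snd z"] by (simp add: field_simps)
    then show "(\<Sum>b\<in>Basis. ennreal ?c * ennreal \<bar>fst z \<bullet> b - snd z \<bullet> b\<bar>) \<le> ennreal (dist (fst z) (snd z))"
      by (simp add: sum_ennreal sum_distrib_left ennreal_leI flip: ennreal_mult)
  qed
  finally show ?thesis .
qed

lemma mean_dist_unit_cube_uniform_le:
  "(\<integral>\<^sup>+ z. ennreal (dist (fst z) (snd z)) \<partial>(unit_cube_uniform \<Otimes>\<^sub>M (unit_cube_uniform :: 'a::euclidean_space measure)))
     \<le> ennreal (sqrt (DIM('a) / 6))"
proof (rule nn_integral_le_sqrt_nn_integral_square)
  let ?UU = "unit_cube_uniform \<Otimes>\<^sub>M (unit_cube_uniform :: 'a measure)"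
  have sets_UU: "sets ?UU = sets borel" by (rule sets_pair_measure_borel) simp_all
  show "prob_space ?UU" by (intro prob_space_pair prob_space_unit_cube_uniform)
  show "(\<lambda>z. dist (fst z) (snd z)) \<in> borel_measurable ?UU"
    by (intro measurable_continuous_on_borel_sets sets_UU continuous_intros) simp
  have "(\<integral>\<^sup>+ z. ennreal ((dist (fst z) (snd z))\<^sup>2) \<partial>?UU)
      = (\<integral>\<^sup>+ z. (\<Sum>b\<in>Basis. ennreal ((fst z \<bullet> b - snd z \<bullet> b)\<^sup>2)) \<partial>?UU)"
    by (simp add: dist_square_eq_sum_component sum_ennreal)
  also have "\<dots> = (\<Sum>b\<in>(Basis :: 'a set). ennreal (1/6))"
    by (subst nn_integral_sum)
       (simp_all add: mean_sq_diff_unit_cube_uniform_component sets_UU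
         measurable_continuous_on_borel_sets continuous_on_ennreal continuous_intros)
  also have "\<dots> = ennreal (DIM('a) / 6)"
    by (simp add: ennreal_of_nat_eq_real_of_nat flip: ennreal_mult)
  finally show "(\<integral>\<^sup>+ z. ennreal ((dist (fst z) (snd z))\<^sup>2) \<partial>?UU) = ennreal (DIM('a) / 6)" .
qed

lemma eVar_unit_cube_uniform_bounds:
  "ennreal (sqrt DIM('a) / 3) \<le> eVar (unit_cube_uniform :: 'a::euclidean_space measure) \<and>
   eVar (unit_cube_uniform :: 'a measure) \<le> ennreal (sqrt (DIM('a) / 6))"
  using mean_dist_unit_cube_uniform_ge mean_dist_unit_cube_uniform_le
  by (simp add: eVar_eq_mean_dist prob_space_unit_cube_uniform)

theorem mainTheorem9:
  fixes U :: "(real ^ 'n) measure"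
  assumes "U = uniform_measure lborel (cbox 0 One)"
  shows "ennreal (sqrt (real CARD('n)) / 3) \<le> eVar U \<and>
         eVar U \<le> ennreal (sqrt (real CARD('n) / 6))"
  using eVar_unit_cube_uniform_bounds[where 'a = "real ^ 'n"] assms by simp

end
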